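(* Let $R$ be a commutative ring with unit and let $M\subset\mathbb{M}_R$ be a $\Rightarrow_R$-connected subset. Then for any nonempty subset $M'\subset M$ the homomorphism $\rho^R_{M,M'}\colon R[q]^M\to R[q]^{M'}$ is injective.
   Context: $q$ is an indeterminate. $\mathbb{M}_R$ is the set of monic polynomials in $R[q]$. For $M\subset\mathbb{M}_R$, $M^*$ is the multiplicative set generated by $M$, directed by divisibility, and $R[q]^M=\varprojlim_{f\in M^*}R[q]/(f)$; for $M'\subset M$, $\rho^R_{M,M'}$ is induced by the identity of $R[q]$. For $f,g\in\mathbb{M}_R$ write $f\Rightarrow_R g$ if there exist an ideal $I\subset R$ with $\bigcap_{j\ge0}I^j=(0)$ and $m\ge0$ with $f^m\in(g)+I[q]$. $M$ is $\Rightarrow_R$-connected if $M$ is nonempty and for all $f,f'\in M$ there is a sequence $f=f_0\Rightarrow_R f_1\Rightarrow_R\cdots\Rightarrow_R f_r=f'$ ($r\ge0$) in $M$. *)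

theory Defs
  imports "HOL-Computational_Algebra.Polynomial"
begin

definition monic_poly :: "'a::comm_ring_1 poly \<Rightarrow> bool" where
  "monic_poly f \<longleftrightarrow> lead_coeff f = 1"

definition mult_closure :: "'a::comm_ring_1 poly set \<Rightarrow> 'a poly set" where
  "mult_closure M = {prod_mset F | F. set_mset F \<subseteq> M}"

definition is_ideal :: "'a::comm_ring_1 set \<Rightarrow> bool" where
  "is_ideal I \<longleftrightarrow> 0 \<in> I \<and> (\<forall>x\<in>I. \<forall>y\<in>I. x + y \<in> I) \<and> (\<forall>r x. x \<in> I \<longrightarrow> r * x \<in> I)"

definition ideal_prod :: "'a::comm_ring_1 set \<Rightarrow> 'a set \<Rightarrow> 'a set" where
  "ideal_prod A B = {\<Sum>k<n. a k * b k | (n::nat) a b. \<forall>k<n. a k \<in> A \<and> b k \<in> B}"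

fun ideal_pow :: "'a::comm_ring_1 set \<Rightarrow> nat \<Rightarrow> 'a set" where
  "ideal_pow I 0 = UNIV"
| "ideal_pow I (Suc j) = ideal_prod I (ideal_pow I j)"

definition poly_ext :: "'a::comm_ring_1 set \<Rightarrow> 'a poly set" where
  "poly_ext I = {p. \<forall>i. coeff p i \<in> I}"

definition implies_R :: "'a::comm_ring_1 poly \<Rightarrow> 'a poly \<Rightarrow> bool" where
  "implies_R f g \<longleftrightarrow> (\<exists>I m. is_ideal I \<and> (\<Inter>j. ideal_pow I j) = {0} \<and>
      (\<exists>h p. p \<in> poly_ext I \<and> f ^ m = g * h + p))"

definition implies_connected :: "'a::comm_ring_1 poly set \<Rightarrow> bool" where
  "implies_connected M \<longleftrightarrow> M \<noteq> {} \<and>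
     (\<forall>f\<in>M. \<forall>f'\<in>M. (\<lambda>x y. x \<in> M \<and> y \<in> M \<and> implies_R x y)\<^sup>*\<^sup>* f f')"

text \<open>Elements of R[q]^M = lim_{f in M*} R[q]/(f), represented as compatible families
  (a f)_{f in M*} of polynomials, a f representing a class in R[q]/(f).\<close>
definition in_limit :: "'a::comm_ring_1 poly set \<Rightarrow> ('a poly \<Rightarrow> 'a poly) \<Rightarrow> bool" where
  "in_limit M a \<longleftrightarrow> (\<forall>f\<in>mult_closure M. \<forall>g\<in>mult_closure M. f dvd g \<longrightarrow> f dvd (a g - a f))"

definition limit_eq :: "'a::comm_ring_1 poly set \<Rightarrow> ('a poly \<Rightarrow> 'a poly) \<Rightarrow> ('a poly \<Rightarrow> 'a poly) \<Rightarrow> bool" where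
  "limit_eq M a b \<longleftrightarrow> (\<forall>f\<in>mult_closure M. f dvd (a f - b f))"

text \<open>rho_{M,M'} sends the family a to its restriction to M'*, so injectivity means:
  two elements of R[q]^M with equal images in R[q]^{M'} are equal.\<close>
definition rho_injective :: "'a::comm_ring_1 poly set \<Rightarrow> 'a poly set \<Rightarrow> bool" where
  "rho_injective M M' \<longleftrightarrow> (\<forall>a b. in_limit M a \<longrightarrow> in_limit M b \<longrightarrow> limit_eq M' a b \<longrightarrow> limit_eq M a b)"

end

theory Submission
  imports Defs
begin

(* Put c = a - b, a compatible family vanishing on all powers of one f0 in M'.
   If f =>_R g via f^m = g h + p with p in I[q], then f^(m(n+j)) lies in (g^n) + I^j[q],
   so if c vanishes at every G f^k, then c(G g^n) lies in (G g^n) + I^j[q] for every j.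
   As G g^n is monic, R[q]/(G g^n) is a free R-module, hence I-adically separated, and c
   vanishes at G g^n. Walking along =>_R-chains from f0 to a factor g and back absorbs the
   factors of an arbitrary element of M* one at a time. *)

lemma is_ideal_sum:
  assumes "is_ideal K" "\<And>x. x \<in> S \<Longrightarrow> f x \<in> K"
  shows "sum f S \<in> K"
  using assms(2)
  by (induction S rule: infinite_finite_induct) (use assms(1) in \<open>auto simp: is_ideal_def\<close>)

lemma is_ideal_uminus: "is_ideal K \<Longrightarrow> x \<in> K \<Longrightarrow> - x \<in> K"
  unfolding is_ideal_def by (metis mult_minus1)

lemma ideal_prodI: "\<forall>k<(n::nat). a k \<in> A \<and> b k \<in> B \<Longrightarrow> (\<Sum>k<n. a k * b k) \<in> ideal_prod A B"
  unfolding ideal_prod_def by blast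

lemma ideal_prod_add_mult:
  assumes "x \<in> ideal_prod A B" "a \<in> A" "b \<in> B"
  shows "x + a * b \<in> ideal_prod A B"
proof -
  obtain n :: nat and f g where x: "x = (\<Sum>k<n. f k * g k)" and fg: "\<forall>k<n. f k \<in> A \<and> g k \<in> B"
    using assms(1) unfolding ideal_prod_def by blast
  have "x + a * b = (\<Sum>k<Suc n. (f(n := a)) k * (g(n := b)) k)"
    unfolding x by simp
  moreover have "\<forall>k<Suc n. (f(n := a)) k \<in> A \<and> (g(n := b)) k \<in> B"
    using fg assms(2,3) by (simp add: less_Suc_eq)
  ultimately show ?thesis by (simp only: ideal_prodI)
qed

lemma is_ideal_ideal_prod:
  assumes A: "is_ideal A"
  shows "is_ideal (ideal_prod A B)"
  unfolding is_ideal_def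
proof (intro conjI ballI allI impI)
  show "0 \<in> ideal_prod A B"
    unfolding ideal_prod_def by (intro CollectI exI[of _ 0]) auto
  fix x y assume x: "x \<in> ideal_prod A B" and y: "y \<in> ideal_prod A B"
  obtain n :: nat and f g where y_eq: "y = (\<Sum>k<n. f k * g k)" and fg: "\<forall>k<n. f k \<in> A \<and> g k \<in> B"
    using y unfolding ideal_prod_def by blast
  have "x + (\<Sum>k<m. f k * g k) \<in> ideal_prod A B" if "m \<le> n" for m
    using that
  proof (induction m)
    case (Suc m)
    then have "x + (\<Sum>k<m. f k * g k) + f m * g m \<in> ideal_prod A B"
      using fg by (intro ideal_prod_add_mult) auto
    then show ?case by (simp add: add.assoc)
  qed (use x in simp)
  then show "x + y \<in> ideal_prod A B" unfolding y_eq by blast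
next
  fix r x assume "x \<in> ideal_prod A B"
  then obtain n :: nat and f g where x: "x = (\<Sum>k<n. f k * g k)" and fg: "\<forall>k<n. f k \<in> A \<and> g k \<in> B"
    unfolding ideal_prod_def by blast
  have "r * x = (\<Sum>k<n. (r * f k) * g k)"
    unfolding x by (simp add: sum_distrib_left mult.assoc)
  moreover have "\<forall>k<n. r * f k \<in> A \<and> g k \<in> B"
    using fg A unfolding is_ideal_def by auto
  ultimately show "r * x \<in> ideal_prod A B" by (simp add: ideal_prodI)
qed

lemma is_ideal_ideal_pow: "is_ideal I \<Longrightarrow> is_ideal (ideal_pow I j)"
  by (cases j) (simp_all add: is_ideal_ideal_prod, simp add: is_ideal_def)

lemma poly_ext_add: "is_ideal K \<Longrightarrow> p \<in> poly_ext K \<Longrightarrow> q \<in> poly_ext K \<Longrightarrow> p + q \<in> poly_ext K"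
  unfolding poly_ext_def is_ideal_def by auto

lemma poly_ext_mult_left: "is_ideal K \<Longrightarrow> p \<in> poly_ext K \<Longrightarrow> q * p \<in> poly_ext K"
  unfolding poly_ext_def
  by (auto simp: coeff_mult intro!: is_ideal_sum) (auto simp: is_ideal_def)

lemma poly_ext_mult_right: "is_ideal K \<Longrightarrow> p \<in> poly_ext K \<Longrightarrow> p * q \<in> poly_ext K"
  using poly_ext_mult_left by (metis mult.commute)

lemma poly_ext_monom: "is_ideal K \<Longrightarrow> c \<in> K \<Longrightarrow> monom c d \<in> poly_ext K"
  unfolding poly_ext_def is_ideal_def by (auto simp: coeff_monom)

lemma poly_ext_mult_ideal_prod:
  assumes "p \<in> poly_ext A" "q \<in> poly_ext B"
  shows "p * q \<in> poly_ext (ideal_prod A B)"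
  unfolding poly_ext_def
proof (intro CollectI allI)
  fix i
  have "\<forall>k<Suc i. coeff p k \<in> A \<and> coeff q (i - k) \<in> B"
    using assms unfolding poly_ext_def by blast
  then have "(\<Sum>k<Suc i. coeff p k * coeff q (i - k)) \<in> ideal_prod A B"
    by (rule ideal_prodI)
  then show "coeff (p * q) i \<in> ideal_prod A B"
    by (simp only: coeff_mult lessThan_Suc_atMost)
qed

lemma poly_ext_power: "p \<in> poly_ext I \<Longrightarrow> p ^ j \<in> poly_ext (ideal_pow I j)"
  by (induction j) (auto simp: poly_ext_def[of UNIV] intro: poly_ext_mult_ideal_prod)

lemma poly_ext_remainder_monic:
  assumes K: "is_ideal K" and F: "lead_coeff F = 1"
    and r: "r = 0 \<or> degree r < degree F"
    and rw: "r - F * w \<in> poly_ext K"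
  shows "r \<in> poly_ext K"
  using rw
proof (induction "degree w" arbitrary: w rule: less_induct)
  case less
  show ?case
  proof (cases "w = 0")
    case True
    then show ?thesis using less.prems by simp
  next
    case False
    define d where "d = degree w"
    define l where "l = lead_coeff w"
    have "coeff r (degree F + d) = 0"
      using r by (auto intro: coeff_eq_0)
    moreover have "coeff (F * w) (degree F + d) = l"
      using coeff_mult_degree_sum[of F w] F by (simp add: d_def l_def)
    ultimately have "coeff (r - F * w) (degree F + d) = - l"
      by simp
    then have "- l \<in> K"
      using less.prems unfolding poly_ext_def by (metis mem_Collect_eq)
    then have l: "l \<in> K"
      using is_ideal_uminus[OF K, of "- l"] by simp
    define w' where "w' = w - monom l d"
    have "(r - F * w) + F * monom l d \<in> poly_ext K"
      using poly_ext_add[OF K less.prems poly_ext_mult_left[OF K poly_ext_monom[OF K l]]] .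
    moreover have "r - F * w' = (r - F * w) + F * monom l d"
      unfolding w'_def by (simp add: algebra_simps)
    ultimately have rw': "r - F * w' \<in> poly_ext K" by (simp only:)
    show ?thesis
    proof (cases "w' = 0")
      case True
      then show ?thesis using rw' by simp
    next
      case False
      have "\<forall>k\<ge>d. coeff w' k = 0"
        unfolding w'_def l_def d_def by (auto simp: coeff_monom coeff_eq_0)
      then have "degree w' < degree w"
        using False by (auto simp: d_def intro: degree_lessI)
      then show ?thesis using less.hyps rw' by blast
    qed
  qed
qed

lemma monic_dvd_if_dvd_modulo_ideal_powers:
  assumes I: "is_ideal I" and separated: "(\<Inter>j. ideal_pow I j) = {0}"
    and F: "lead_coeff F = 1"
    and approx: "\<And>j. \<exists>u v. v \<in> poly_ext (ideal_pow I j) \<and> x = F * u + v"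
  shows "F dvd x"
proof (cases "(1::'a) = 0")
  case True
  then have "(1::'a poly) = 0" by (simp add: poly_eq_iff)
  then have "x = 0" by (metis mult_1 mult_zero_left)
  then show ?thesis by simp
next
  case False
  then have "F \<noteq> 0" using F by auto
  obtain s r where sr: "pseudo_divmod x F = (s, r)" by (cases "pseudo_divmod x F")
  have x: "x = F * s + r" using pseudo_divmod(1)[OF \<open>F \<noteq> 0\<close> sr] F by simp
  have r: "r = 0 \<or> degree r < degree F" using pseudo_divmod(2)[OF \<open>F \<noteq> 0\<close> sr] .
  have "coeff r i \<in> ideal_pow I j" for i j
  proof -
    obtain u v where v: "v \<in> poly_ext (ideal_pow I j)" and "x = F * u + v" using approx by blast
    then have "r - F * (u - s) = v" using x by (simp add: algebra_simps)
    then have "r \<in> poly_ext (ideal_pow I j)"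
      using poly_ext_remainder_monic[OF is_ideal_ideal_pow[OF I] F r] v by blast
    then show ?thesis unfolding poly_ext_def by simp
  qed
  then have "r = 0" using separated by (auto simp: poly_eq_iff)
  then show ?thesis using x by simp
qed

lemma power_of_sum_decompose:
  fixes a b :: "'a::comm_semiring_1"
  shows "\<exists>u w. (a + b) ^ (n + j) = a ^ n * u + b ^ j * w"
proof (induction n arbitrary: j)
  case 0
  show ?case by (rule exI[of _ "(a + b) ^ j"], rule exI[of _ 0]) simp
next
  case (Suc n)
  note IH_n = Suc.IH
  show ?case
  proof (induction j)
    case 0
    show ?case by (rule exI[of _ 0], rule exI[of _ "(a + b) ^ Suc n"]) simp
  next
    case (Suc j)
    obtain u w where 1: "(a + b) ^ (n + Suc j) = a ^ n * u + b ^ Suc j * w"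
      using IH_n by blast
    obtain u' w' where 2: "(a + b) ^ (Suc n + j) = a ^ Suc n * u' + b ^ j * w'"
      using Suc.IH by blast
    have "(a + b) ^ (Suc n + Suc j) = a * (a + b) ^ (n + Suc j) + b * (a + b) ^ (Suc n + j)"
      by (simp add: algebra_simps)
    also have "\<dots> = a ^ Suc n * (u + b * u') + b ^ Suc j * (a * w + w')"
      unfolding 1 2 by (simp add: algebra_simps)
    finally show ?case by blast
  qed
qed

lemma mult_closure_one: "1 \<in> mult_closure M"
  unfolding mult_closure_def by (intro CollectI exI[of _ "{#}"]) simp

lemma mult_closure_mult: "F \<in> mult_closure M \<Longrightarrow> G \<in> mult_closure M \<Longrightarrow> F * G \<in> mult_closure M"
  unfolding mult_closure_def
proof clarify
  fix A B assume "set_mset A \<subseteq> M" "set_mset B \<subseteq> M"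
  then show "\<exists>C. prod_mset A * prod_mset B = prod_mset C \<and> set_mset C \<subseteq> M"
    by (intro exI[of _ "A + B"]) auto
qed

lemma mult_closure_base: "f \<in> M \<Longrightarrow> f \<in> mult_closure M"
  unfolding mult_closure_def by (intro CollectI exI[of _ "{#f#}"]) simp

lemma mult_closure_power: "f \<in> mult_closure M \<Longrightarrow> f ^ k \<in> mult_closure M"
  by (induction k) (simp_all add: mult_closure_one mult_closure_mult)

lemma lead_coeff_mult_monic:
  fixes p q :: "'a::comm_ring_1 poly"
  assumes p: "lead_coeff p = 1"
  shows "lead_coeff (p * q) = lead_coeff q"
proof (cases "q = 0")
  case False
  have top: "coeff (p * q) (degree p + degree q) = lead_coeff q"
    using coeff_mult_degree_sum[of p q] p by simp
  then have "degree p + degree q \<le> degree (p * q)"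
    using False by (intro le_degree) simp
  then have "degree (p * q) = degree p + degree q"
    using degree_mult_le[of p q] by simp
  then show ?thesis using top by simp
qed simp

lemma mult_closure_monic:
  assumes "\<forall>f\<in>M. monic_poly f" "F \<in> mult_closure M"
  shows "lead_coeff F = 1"
proof -
  obtain A where F: "F = prod_mset A" and A: "set_mset A \<subseteq> M"
    using assms(2) unfolding mult_closure_def by blast
  have "lead_coeff (prod_mset A) = 1"
    using A by (induction A) (use assms(1) in \<open>auto simp: monic_poly_def lead_coeff_mult_monic\<close>)
  then show ?thesis using F by simp
qed

lemma in_limit_diff:
  assumes "in_limit M a" "in_limit M b"
  shows "in_limit M (\<lambda>F. a F - b F)"
  unfolding in_limit_def
proof (intro ballI impI)
  fix F G assume "F \<in> mult_closure M" "G \<in> mult_closure M" "F dvd G"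
  then have "F dvd (a G - a F) - (b G - b F)"
    using assms unfolding in_limit_def by (blast intro: dvd_diff)
  then show "F dvd (a G - b G) - (a F - b F)"
    by (simp add: algebra_simps)
qed

lemma in_limit_value_in_ideal_sum:
  assumes c: "in_limit M c" and F: "F \<in> mult_closure M" and A: "A \<in> mult_closure M"
    and zero: "A dvd c A"
  shows "\<exists>u s. c F = F * u + A * s"
proof -
  have FA: "F * A \<in> mult_closure M" using F A by (rule mult_closure_mult)
  have "A dvd c (F * A) - c A" using c A FA unfolding in_limit_def by simp
  with zero have "A dvd c (F * A)" by (metis dvd_add diff_add_cancel)
  then obtain s where s: "c (F * A) = A * s" ..
  have "F dvd c (F * A) - c F" using c F FA unfolding in_limit_def by simp
  then obtain t where t: "c (F * A) - c F = F * t" ..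
  have "c F = F * (- t) + A * s" using s t by (simp add: algebra_simps)
  then show ?thesis by blast
qed

lemma in_limit_transfer_step:
  assumes monic: "\<forall>f\<in>M. monic_poly f" and c: "in_limit M c"
    and G: "G \<in> mult_closure M" and f: "f \<in> M" and g: "g \<in> M"
    and fg: "implies_R f g"
    and zero_f: "\<forall>k. G * f ^ k dvd c (G * f ^ k)"
  shows "G * g ^ n dvd c (G * g ^ n)"
proof -
  obtain I m h p where I: "is_ideal I" and separated: "(\<Inter>j. ideal_pow I j) = {0}"
    and p: "p \<in> poly_ext I" and fm: "f ^ m = g * h + p"
    using fg unfolding implies_R_def by blast
  define F where "F = G * g ^ n"
  have F_mc: "F \<in> mult_closure M"
    unfolding F_def using G g by (simp add: mult_closure_mult mult_closure_power mult_closure_base)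
  show ?thesis
    unfolding F_def[symmetric]
  proof (rule monic_dvd_if_dvd_modulo_ideal_powers[OF I separated])
    show "lead_coeff F = 1" using mult_closure_monic[OF monic F_mc] .
  next
    fix j
    obtain u w where uw: "(g * h + p) ^ (n + j) = (g * h) ^ n * u + p ^ j * w"
      using power_of_sum_decompose by blast
    define k where "k = m * (n + j)"
    have fk: "f ^ k = g ^ n * (h ^ n * u) + p ^ j * w"
      unfolding k_def power_mult fm uw by (simp add: power_mult_distrib algebra_simps)
    have "G * f ^ k \<in> mult_closure M"
      using G f by (simp add: mult_closure_mult mult_closure_power mult_closure_base)
    then obtain u' s where "c F = F * u' + G * f ^ k * s"
      using in_limit_value_in_ideal_sum[OF c F_mc] zero_f by blast
    then have "c F = F * (u' + h ^ n * u * s) + p ^ j * (w * G * s)"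
      unfolding fk F_def by (simp add: algebra_simps)
    moreover have "p ^ j * (w * G * s) \<in> poly_ext (ideal_pow I j)"
      using poly_ext_mult_right[OF is_ideal_ideal_pow[OF I] poly_ext_power[OF p]] .
    ultimately show "\<exists>u v. v \<in> poly_ext (ideal_pow I j) \<and> c F = F * u + v"
      by blast
  qed
qed

lemma in_limit_transfer_chain:
  assumes monic: "\<forall>f\<in>M. monic_poly f" and c: "in_limit M c"
    and G: "G \<in> mult_closure M"
    and chain: "(\<lambda>x y. x \<in> M \<and> y \<in> M \<and> implies_R x y)\<^sup>*\<^sup>* f g" and f: "f \<in> M"
    and zero_f: "\<forall>k. G * f ^ k dvd c (G * f ^ k)"
  shows "\<forall>n. G * g ^ n dvd c (G * g ^ n)"
proof -
  have "g \<in> M \<and> (\<forall>n. G * g ^ n dvd c (G * g ^ n))"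
    using chain
  proof (induction rule: rtranclp_induct)
    case base
    then show ?case using f zero_f by simp
  next
    case (step y z)
    then show ?case using in_limit_transfer_step[OF monic c G, of y z] by blast
  qed
  then show ?thesis by blast
qed

lemma in_limit_zero_if_zero_on_powers:
  assumes monic: "\<forall>f\<in>M. monic_poly f" and conn: "implies_connected M"
    and c: "in_limit M c" and f0: "f0 \<in> M"
    and zero_f0: "\<forall>k. f0 ^ k dvd c (f0 ^ k)"
    and F: "F \<in> mult_closure M"
  shows "F dvd c F"
proof -
  have chain: "(\<lambda>x y. x \<in> M \<and> y \<in> M \<and> implies_R x y)\<^sup>*\<^sup>* f g" if "f \<in> M" "g \<in> M" for f g
    using conn that unfolding implies_connected_def by blast
  obtain A where F_eq: "F = prod_mset A" and A: "set_mset A \<subseteq> M"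
    using F unfolding mult_closure_def by blast
  \<comment> \<open>Generalised to all f0^k so that, after absorbing a factor g, the chain can be
      walked back from g to f0.\<close>
  have "\<forall>k. prod_mset A * f0 ^ k dvd c (prod_mset A * f0 ^ k)"
    using A
  proof (induction A)
    case empty
    then show ?case using zero_f0 by simp
  next
    case (add g A)
    then have g: "g \<in> M" and A_mc: "prod_mset A \<in> mult_closure M"
      unfolding mult_closure_def by auto
    have "\<forall>n. prod_mset A * g ^ n dvd c (prod_mset A * g ^ n)"
      using in_limit_transfer_chain[OF monic c A_mc chain[OF f0 g] f0] add by simp
    then have "\<forall>n. (prod_mset A * g) * g ^ n dvd c ((prod_mset A * g) * g ^ n)"
      by (metis mult.assoc power_Suc)
    moreover have "prod_mset A * g \<in> mult_closure M"
      using A_mc g by (simp add: mult_closure_mult mult_closure_base)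
    ultimately have "\<forall>k. (prod_mset A * g) * f0 ^ k dvd c ((prod_mset A * g) * f0 ^ k)"
      using in_limit_transfer_chain[OF monic c _ chain[OF g f0] g] by blast
    then show ?case by (simp add: mult_ac)
  qed
  then show ?thesis using F_eq by (metis mult_1_right power_0)
qed

theorem corollary3p5:
  fixes M M' :: "'a::comm_ring_1 poly set"
  assumes "\<forall>f\<in>M. monic_poly f"
    and "implies_connected M"
    and "M' \<subseteq> M" and "M' \<noteq> {}"
  shows "rho_injective M M'"
  unfolding rho_injective_def
proof (intro allI impI)
  fix a b assume a: "in_limit M a" and b: "in_limit M b" and ab: "limit_eq M' a b"
  obtain f0 where f0: "f0 \<in> M'" using assms(4) by blast
  have "\<forall>k. f0 ^ k dvd a (f0 ^ k) - b (f0 ^ k)"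
    using ab mult_closure_power[OF mult_closure_base[OF f0]] unfolding limit_eq_def by blast
  then show "limit_eq M a b"
    unfolding limit_eq_def
    using in_limit_zero_if_zero_on_powers[OF assms(1,2) in_limit_diff[OF a b]] f0 assms(3)
    by blast
qed

end
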